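(* Let $d\ge 2$ and let $\varphi:[0,\infty)\to[0,1]$ be the Laplace transform of a strictly positive random variable, continuous and strictly decreasing with $\varphi(0)=1$ and $\lim_{t\to\infty}\varphi(t)=0$, and let $C(u_1,\dots,u_d)=\varphi\big(\sum_{i=1}^d\varphi^{-1}(u_i)\big)$ be the associated Archimedean copula. Suppose $\varphi\in\Gamma_\alpha(g)$ for some $\alpha>0$ and some positive measurable function $g$ that is ultimately decreasing. Suppose moreover that for some $k$ with $1\le k\le d$, $$\lim_{t\to\infty}\frac{\varphi(td)}{\varphi(t)^k}=\tau\in(0,\infty).$$ Then for every $w=(w_1,\dots,w_d)\in\mathbb{R}_+^d$, $$\lim_{u\downarrow 0}\frac{C(uw_1,\dots,uw_d)}{u^k}=\tau\prod_{i=1}^d w_i^{k/d}.$$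
   Context: For $\alpha\ge0$ and a positive measurable function $g$, the class $\Gamma_\alpha(g)$ consists of the measurable functions $f$ such that $\lim_{t\to\infty} f(t+xg(t))/f(t)=e^{-\alpha x}$ for all $x\in\mathbb{R}$. (For $f\in\Gamma_\alpha(g)$ the function $g$ is then self-neglecting: $g(t)/t\to0$ and $g(t+xg(t))/g(t)\to1$ locally uniformly in $x\in\mathbb{R}$.) "Ultimately decreasing" means non-increasing on $[t_0,\infty)$ for some $t_0$. *)

theory Defs
  imports "HOL-Probability.Probability"
begin

definition laplace_transform_of_pos_rv :: "(real \<Rightarrow> real) \<Rightarrow> bool" where
  "laplace_transform_of_pos_rv \<phi> \<longleftrightarrow>
     (\<exists>\<mu>. prob_space \<mu> \<and> sets \<mu> = sets borel \<and> emeasure \<mu> {..0} = 0 \<and>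
          (\<forall>t\<ge>0. \<phi> t = (\<integral>x. exp (- t * x) \<partial>\<mu>)))"

definition Gamma_class :: "real \<Rightarrow> (real \<Rightarrow> real) \<Rightarrow> (real \<Rightarrow> real) set" where
  "Gamma_class \<alpha> g = {f. f \<in> borel_measurable borel \<and>
     (\<forall>x. ((\<lambda>t. f (t + x * g t) / f t) \<longlongrightarrow> exp (- \<alpha> * x)) at_top)}"

definition ultimately_decreasing :: "(real \<Rightarrow> real) \<Rightarrow> bool" where
  "ultimately_decreasing g \<longleftrightarrow> (\<exists>t0. \<forall>s t. t0 \<le> s \<longrightarrow> s \<le> t \<longrightarrow> g t \<le> g s)"

definition gen_inv :: "(real \<Rightarrow> real) \<Rightarrow> real \<Rightarrow> real" where
  "gen_inv \<phi> u = (THE t. t \<ge> 0 \<and> \<phi> t = u)"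

text \<open>Archimedean copula C(u_1..u_d) = phi(sum phi^{-1}(u_i)), with the
  convention phi^{-1}(0) = infinity, phi(infinity) = 0.\<close>
definition arch_copula :: "(real \<Rightarrow> real) \<Rightarrow> nat \<Rightarrow> (nat \<Rightarrow> real) \<Rightarrow> real" where
  "arch_copula \<phi> d u =
     (if \<exists>i<d. u i = 0 then 0 else \<phi> (\<Sum>i<d. gen_inv \<phi> (u i)))"

end

theory Submission
  imports Defs
begin

text \<open>Write \<open>\<psi> = - ln \<circ> \<phi>\<close>. A Laplace transform is log-convex (Hoelder), so \<open>\<psi>\<close> is concave and
  increasing on \<open>[0, \<infinity>)\<close>; it therefore has an asymptotic slope \<open>L = lim (\<psi> (t + 1) - \<psi> t)\<close>, and
  \<open>\<psi> x - \<psi> y - L (x - y) \<rightarrow> 0\<close> as \<open>x, y \<rightarrow> \<infinity>\<close> with \<open>x - y\<close> bounded. Since \<open>\<psi> (t + g t) - \<psi> t \<rightarrow> \<alpha>\<close>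
  with \<open>g\<close> eventually bounded, \<open>L > 0\<close>; consequently \<open>\<psi> (d t) - k \<psi> t\<close> can only converge if
  \<open>k = d\<close>. Put \<open>t = \<phi>\<^sup>-\<^sup>1 u\<close> and \<open>x\<^sub>i = \<phi>\<^sup>-\<^sup>1 (u w\<^sub>i)\<close>: then \<open>\<psi> x\<^sub>i - \<psi> t = - ln w\<^sub>i\<close>, hence
  \<open>x\<^sub>i - t \<rightarrow> - ln w\<^sub>i / L\<close> and \<open>\<psi> (\<Sum> x\<^sub>i) - \<psi> (d t) \<rightarrow> - \<Sum> ln w\<^sub>i\<close>. Finally
  \<open>C (u w) / u\<^sup>k = \<phi> (\<Sum> x\<^sub>i) / \<phi> (d t) \<cdot> \<phi> (t d) / \<phi> t\<^sup>k \<rightarrow> \<Prod> w\<^sub>i \<cdot> \<tau>\<close>.\<close>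

lemma filterlim_add_const_at_top_real: "filterlim (\<lambda>x::real. x + c) at_top at_top"
  by (subst add.commute) (rule filterlim_tendsto_add_at_top[OF tendsto_const filterlim_ident])

locale concave_mono_halfline =
  fixes \<psi> :: "real \<Rightarrow> real"
  assumes concave: "concave_on {0..} \<psi>"
    and mono: "mono_on {0..} \<psi>"
begin

lemma secant_slope_antimono:
  assumes "0 \<le> a" "a < b" "c < e" "a \<le> c" "b \<le> e"
  shows "(\<psi> e - \<psi> c) / (e - c) \<le> (\<psi> b - \<psi> a) / (b - a)"
proof -
  have convex: "convex_on {0..} (\<lambda>x. - \<psi> x)"
    using concave by (simp add: concave_on_def)
  have neg_slope: "((- p) - (- q)) / (x - y) = - ((q - p) / (y - x))" for p q x y :: real
    by (metis divide_minus_right minus_diff_eq minus_diff_minus)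
  have "(\<psi> e - \<psi> a) / (e - a) \<le> (\<psi> b - \<psi> a) / (b - a)"
  proof (cases "b = e")
    case False
    then have "((- \<psi> a) - (- \<psi> b)) / (a - b) \<le> ((- \<psi> a) - (- \<psi> e)) / (a - e)"
      using assms by (intro convex_on_slope_le(1)[OF convex]) auto
    then show ?thesis unfolding neg_slope by linarith
  qed simp
  moreover have "(\<psi> e - \<psi> c) / (e - c) \<le> (\<psi> e - \<psi> a) / (e - a)"
  proof (cases "a = c")
    case False
    then have "((- \<psi> a) - (- \<psi> e)) / (a - e) \<le> ((- \<psi> c) - (- \<psi> e)) / (c - e)"
      using assms by (intro convex_on_slope_le(2)[OF convex]) auto
    then show ?thesis unfolding neg_slope by linarith
  qed simp
  ultimately show ?thesis by linarith
qed

definition increment :: "real \<Rightarrow> real" where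
  "increment t = \<psi> (t + 1) - \<psi> t"

definition asymptotic_slope :: real where
  "asymptotic_slope = Inf (increment ` {0..})"

lemma increment_nonneg: "0 \<le> t \<Longrightarrow> 0 \<le> increment t"
  using mono_onD[OF mono, of t "t + 1"] by (simp add: increment_def)

lemma increment_antimono: "0 \<le> t \<Longrightarrow> t \<le> t' \<Longrightarrow> increment t' \<le> increment t"
  using secant_slope_antimono[of t "t + 1" t' "t' + 1"] by (simp add: increment_def)

lemma bdd_below_increment: "bdd_below (increment ` {0..})"
  by (rule bdd_belowI[of _ 0]) (auto dest: increment_nonneg)

lemma asymptotic_slope_le_increment: "0 \<le> t \<Longrightarrow> asymptotic_slope \<le> increment t"
  unfolding asymptotic_slope_def by (rule cInf_lower[OF _ bdd_below_increment]) auto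

lemma asymptotic_slope_nonneg: "0 \<le> asymptotic_slope"
  unfolding asymptotic_slope_def by (rule cInf_greatest) (auto dest: increment_nonneg)

lemma increment_tendsto: "(increment \<longlongrightarrow> asymptotic_slope) at_top"
proof (rule order_tendstoI)
  fix a assume "a < asymptotic_slope"
  then show "eventually (\<lambda>t. a < increment t) at_top"
    unfolding eventually_at_top_linorder
    by (intro exI[of _ 0]) (auto dest: asymptotic_slope_le_increment)
next
  fix a assume "asymptotic_slope < a"
  then obtain t0 where t0: "0 \<le> t0" "increment t0 < a"
    using cInf_lessD[of "increment ` {0..}" a] by (auto simp: asymptotic_slope_def)
  then show "eventually (\<lambda>t. increment t < a) at_top"
    unfolding eventually_at_top_linorder
    by (intro exI[of _ t0]) (auto dest: increment_antimono[of t0])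
qed

lemma diff_le_increment:
  assumes "1 \<le> y" "y < x" shows "\<psi> x - \<psi> y \<le> increment (y - 1) * (x - y)"
proof -
  have "(\<psi> x - \<psi> y) / (x - y) \<le> (\<psi> y - \<psi> (y - 1)) / (y - (y - 1))"
    using secant_slope_antimono[of "y - 1" y y x] assms by simp
  then show ?thesis using assms by (simp add: increment_def divide_le_eq mult.commute)
qed

lemma asymptotic_slope_le_diff:
  assumes "0 \<le> y" "y < x" shows "asymptotic_slope * (x - y) \<le> \<psi> x - \<psi> y"
proof -
  have "increment x \<le> (\<psi> x - \<psi> y) / (x - y)"
    using secant_slope_antimono[of y x x "x + 1"] assms by (simp add: increment_def)
  moreover have "asymptotic_slope \<le> increment x"
    using asymptotic_slope_le_increment assms by simp
  ultimately have "asymptotic_slope * (x - y) \<le> increment x * (x - y)"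
    "increment x * (x - y) \<le> \<psi> x - \<psi> y"
    using assms by (auto intro: mult_right_mono simp: le_divide_eq)
  then show ?thesis by linarith
qed

lemma asymptotic_slope_abs_le_diff:
  assumes "0 \<le> x" "0 \<le> y" shows "asymptotic_slope * \<bar>x - y\<bar> \<le> \<bar>\<psi> x - \<psi> y\<bar>"
  using asymptotic_slope_le_diff[of y x] asymptotic_slope_le_diff[of x y] assms
  by (cases x y rule: linorder_cases) auto

lemma diff_linear_error_le:
  assumes "1 \<le> T" "T \<le> x" "T \<le> y"
  shows "\<bar>\<psi> x - \<psi> y - asymptotic_slope * (x - y)\<bar>
           \<le> (increment (T - 1) - asymptotic_slope) * \<bar>x - y\<bar>"
proof -
  have ordered: "\<bar>\<psi> x - \<psi> y - asymptotic_slope * (x - y)\<bar>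
                   \<le> (increment (T - 1) - asymptotic_slope) * (x - y)"
    if "T \<le> y" "y < x" for x y
  proof -
    have "\<psi> x - \<psi> y \<le> increment (y - 1) * (x - y)"
      using diff_le_increment[of y x] that assms by simp
    also have "\<dots> \<le> increment (T - 1) * (x - y)"
      using increment_antimono[of "T - 1" "y - 1"] that assms by (intro mult_right_mono) auto
    finally show ?thesis
      using asymptotic_slope_le_diff[of y x] that assms by (simp add: algebra_simps)
  qed
  show ?thesis
    using ordered[of y x] ordered[of x y] assms
    by (cases x y rule: linorder_cases) (auto simp: abs_minus_commute algebra_simps)
qed

lemma tendsto_diff_minus_linear:
  assumes x: "filterlim x at_top F" and y: "filterlim y at_top F"
    and bounded: "eventually (\<lambda>u. \<bar>x u - y u\<bar> \<le> B) F"
  shows "((\<lambda>u. \<psi> (x u) - \<psi> (y u) - asymptotic_slope * (x u - y u)) \<longlongrightarrow> 0) F"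
proof (rule tendstoI)
  fix e :: real assume "e > 0"
  have "((\<lambda>t. increment (t - 1)) \<longlongrightarrow> asymptotic_slope) at_top"
    using filterlim_compose[OF increment_tendsto filterlim_add_const_at_top_real[of "-1"]] by simp
  then obtain T0 where T0: "\<And>t. T0 \<le> t \<Longrightarrow> increment (t - 1) - asymptotic_slope < e / (\<bar>B\<bar> + 1)"
    using \<open>e > 0\<close> order_tendstoD(2)[of _ asymptotic_slope at_top "asymptotic_slope + e / (\<bar>B\<bar> + 1)"]
    by (force simp: eventually_at_top_linorder)
  define T where "T = max T0 1"
  have T: "0 \<le> increment (T - 1) - asymptotic_slope"
    "increment (T - 1) - asymptotic_slope < e / (\<bar>B\<bar> + 1)"
    using T0[of T] asymptotic_slope_le_increment[of "T - 1"] by (auto simp: T_def)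
  have "eventually (\<lambda>u. T \<le> x u \<and> T \<le> y u \<and> \<bar>x u - y u\<bar> \<le> B) F"
    using filterlim_at_top[THEN iffD1, OF x, rule_format, of T]
      filterlim_at_top[THEN iffD1, OF y, rule_format, of T] bounded
    by eventually_elim auto
  then show "eventually (\<lambda>u. dist (\<psi> (x u) - \<psi> (y u) - asymptotic_slope * (x u - y u)) 0 < e) F"
  proof eventually_elim
    case (elim u)
    have "\<bar>\<psi> (x u) - \<psi> (y u) - asymptotic_slope * (x u - y u)\<bar>
          \<le> (increment (T - 1) - asymptotic_slope) * \<bar>x u - y u\<bar>"
      using diff_linear_error_le[of T "x u" "y u"] elim by (simp add: T_def)
    also have "\<dots> \<le> e / (\<bar>B\<bar> + 1) * \<bar>B\<bar>"
      using elim T by (intro mult_mono) auto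
    also have "\<dots> < e" using \<open>e > 0\<close> by (simp add: field_simps)
    finally show ?case by (simp add: dist_real_def)
  qed
qed

lemma tendsto_diff_of_level_diff:
  assumes slope: "asymptotic_slope > 0"
    and x: "filterlim x at_top F" and y: "filterlim y at_top F"
    and level: "eventually (\<lambda>u. \<psi> (x u) - \<psi> (y u) = A) F"
  shows "((\<lambda>u. x u - y u) \<longlongrightarrow> A / asymptotic_slope) F"
proof -
  have "eventually (\<lambda>u. \<bar>x u - y u\<bar> \<le> \<bar>A\<bar> / asymptotic_slope) F"
    using filterlim_at_top[THEN iffD1, OF x, rule_format, of 0]
      filterlim_at_top[THEN iffD1, OF y, rule_format, of 0] level
  proof eventually_elim
    case (elim u)
    then show ?case
      using asymptotic_slope_abs_le_diff[of "x u" "y u"] slope by (simp add: field_simps)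
  qed
  from tendsto_diff_minus_linear[OF x y this]
  have "((\<lambda>u. (\<psi> (x u) - \<psi> (y u)) - (\<psi> (x u) - \<psi> (y u) - asymptotic_slope * (x u - y u)))
          \<longlongrightarrow> A - 0) F"
    by (intro tendsto_diff) (use level in \<open>auto intro: tendsto_eventually\<close>)
  then have "((\<lambda>u. asymptotic_slope * (x u - y u) / asymptotic_slope) \<longlongrightarrow> A / asymptotic_slope) F"
    using slope by (intro tendsto_divide) auto
  then show ?thesis using slope by simp
qed

lemma tendsto_level_diff_sum:
  fixes t :: "'a \<Rightarrow> real" and x :: "'i \<Rightarrow> 'a \<Rightarrow> real"
  assumes slope: "asymptotic_slope > 0" and I: "finite I" "I \<noteq> {}"
    and t: "filterlim t at_top F" and x: "\<And>i. i \<in> I \<Longrightarrow> filterlim (x i) at_top F"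
    and level: "\<And>i. i \<in> I \<Longrightarrow> eventually (\<lambda>u. \<psi> (x i u) - \<psi> (t u) = a i) F"
  shows "((\<lambda>u. \<psi> (\<Sum>i\<in>I. x i u) - \<psi> (card I * t u)) \<longlongrightarrow> (\<Sum>i\<in>I. a i)) F"
proof -
  define X where "X u = (\<Sum>i\<in>I. x i u)" for u
  define Y where "Y u = card I * t u" for u
  define b where "b = (\<Sum>i\<in>I. a i / asymptotic_slope)"
  have "X u - Y u = (\<Sum>i\<in>I. x i u - t u)" for u
    by (simp add: X_def Y_def sum_subtractf)
  then have XY: "((\<lambda>u. X u - Y u) \<longlongrightarrow> b) F"
    unfolding b_def using tendsto_diff_of_level_diff[OF slope x t level]
    by (simp add: tendsto_sum)
  have Y: "filterlim Y at_top F"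
    unfolding Y_def using I by (intro filterlim_tendsto_pos_mult_at_top[OF tendsto_const _ t]) auto
  have X: "filterlim X at_top F"
    using filterlim_tendsto_add_at_top[OF XY Y] by simp
  have "eventually (\<lambda>u. \<bar>X u - Y u\<bar> \<le> \<bar>b\<bar> + 1) F"
    using tendstoD[OF XY zero_less_one] by eventually_elim (auto simp: dist_real_def)
  from tendsto_add[OF tendsto_diff_minus_linear[OF X Y this]
      tendsto_mult[OF tendsto_const[of asymptotic_slope] XY]]
  have "((\<lambda>u. \<psi> (X u) - \<psi> (Y u)) \<longlongrightarrow> 0 + asymptotic_slope * b) F"
    by simp
  moreover have "asymptotic_slope * b = (\<Sum>i\<in>I. a i)"
    using slope by (simp add: b_def sum_distrib_left)
  ultimately show ?thesis by (simp add: X_def Y_def)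
qed

lemma asymptotic_slope_pos:
  assumes h: "eventually (\<lambda>t. 0 \<le> h t \<and> h t \<le> B) at_top"
    and lim: "((\<lambda>t. \<psi> (t + h t) - \<psi> t) \<longlongrightarrow> c) at_top" and "c \<noteq> 0"
  shows "asymptotic_slope > 0"
proof (rule ccontr)
  assume "\<not> asymptotic_slope > 0"
  then have zero: "asymptotic_slope = 0" using asymptotic_slope_nonneg by simp
  have "filterlim (\<lambda>t. t + h t) at_top at_top"
    using h by (intro filterlim_at_top_mono[OF filterlim_ident]) (auto elim: eventually_mono)
  moreover have "eventually (\<lambda>t. \<bar>(t + h t) - t\<bar> \<le> B) at_top"
    using h by eventually_elim auto
  ultimately have "((\<lambda>t. \<psi> (t + h t) - \<psi> t) \<longlongrightarrow> 0) at_top"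
    using tendsto_diff_minus_linear[OF _ filterlim_ident] zero by simp
  with lim \<open>c \<noteq> 0\<close> show False
    using tendsto_unique[OF trivial_limit_at_top_linorder] by blast
qed

lemma scaled_diff_convergent_imp_eq:
  assumes slope: "asymptotic_slope > 0" and "D > 0"
    and lim: "((\<lambda>t. \<psi> (D * t) - k * \<psi> t) \<longlongrightarrow> c) at_top"
  shows "k = D"
proof -
  let ?G = "\<lambda>t. \<psi> (D * t) - k * \<psi> t"
  have "((\<lambda>t. ?G (t + 1) - ?G t) \<longlongrightarrow> c - c) at_top"
    by (intro tendsto_diff filterlim_compose[OF lim filterlim_add_const_at_top_real] lim)
  moreover have "((\<lambda>t. ?G (t + 1) - ?G t) \<longlongrightarrow> 0 + asymptotic_slope * D - k * asymptotic_slope) at_top"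
  proof -
    have Dt: "filterlim (\<lambda>t. D * t) at_top at_top"
      by (rule filterlim_tendsto_pos_mult_at_top[OF tendsto_const \<open>D > 0\<close> filterlim_ident])
    have "((\<lambda>t. \<psi> (D * (t + 1)) - \<psi> (D * t) - asymptotic_slope * (D * (t + 1) - D * t)) \<longlongrightarrow> 0) at_top"
      using \<open>D > 0\<close>
      by (intro tendsto_diff_minus_linear[where B = D] Dt
          filterlim_compose[OF Dt filterlim_add_const_at_top_real]) (simp add: algebra_simps)
    then have "((\<lambda>t. (\<psi> (D * (t + 1)) - \<psi> (D * t) - asymptotic_slope * (D * (t + 1) - D * t))
        + asymptotic_slope * D - k * increment t) \<longlongrightarrow> 0 + asymptotic_slope * D - k * asymptotic_slope) at_top"
      by (intro tendsto_intros increment_tendsto)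
    then show ?thesis by (simp add: increment_def algebra_simps)
  qed
  ultimately have "asymptotic_slope * (D - k) = 0"
    using tendsto_unique[OF trivial_limit_at_top_linorder] by (fastforce simp: algebra_simps)
  then show ?thesis using slope by simp
qed

end

lemma laplace_transform_of_pos_rvE:
  assumes "laplace_transform_of_pos_rv \<phi>"
  obtains \<mu> where "prob_space \<mu>"
    and "\<And>t. 0 \<le> t \<Longrightarrow> integrable \<mu> (\<lambda>x. exp (- t * x))"
    and "\<And>t. 0 \<le> t \<Longrightarrow> \<phi> t = (\<integral>x. exp (- t * x) \<partial>\<mu>)"
proof -
  obtain \<mu> where \<mu>: "prob_space \<mu>" "sets \<mu> = sets borel" "emeasure \<mu> {..0} = 0"
    and \<phi>: "\<And>t. 0 \<le> t \<Longrightarrow> \<phi> t = (\<integral>x. exp (- t * x) \<partial>\<mu>)"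
    using assms unfolding laplace_transform_of_pos_rv_def by blast
  interpret prob_space \<mu> by (rule \<mu>(1))
  have pos: "AE x in \<mu>. 0 < x"
    by (rule AE_I'[of "{..0}"]) (use \<mu>(2,3) in \<open>auto simp: null_sets_def\<close>)
  have "integrable \<mu> (\<lambda>x. exp (- t * x))" if "0 \<le> t" for t
  proof (rule integrable_const_bound[where B = 1])
    show "AE x in \<mu>. norm (exp (- t * x)) \<le> 1"
      using pos by eventually_elim (use that in simp)
    show "(\<lambda>x. exp (- t * x)) \<in> borel_measurable \<mu>"
      by (subst measurable_cong_sets[OF \<mu>(2) refl]) measurable
  qed
  from \<mu>(1) this \<phi> show thesis by (rule that)
qed

lemma laplace_transform_pos:
  assumes "laplace_transform_of_pos_rv \<phi>" "0 \<le> t"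
  shows "0 < \<phi> t"
proof -
  obtain \<mu> where "prob_space \<mu>" and int: "integrable \<mu> (\<lambda>x. exp (- t * x))"
    and \<phi>: "\<phi> t = (\<integral>x. exp (- t * x) \<partial>\<mu>)"
    using laplace_transform_of_pos_rvE[OF assms(1)] assms(2) by metis
  interpret prob_space \<mu> by fact
  have "\<not> (AE x in \<mu>. exp (- t * x) = 0)"
    using AE_False prob_space by simp
  then have "(\<integral>x. exp (- t * x) \<partial>\<mu>) \<noteq> 0"
    using integral_nonneg_eq_0_iff_AE[OF int] by simp
  moreover have "0 \<le> (\<integral>x. exp (- t * x) \<partial>\<mu>)"
    by (rule integral_nonneg_AE) simp
  ultimately show ?thesis using \<phi> by linarith
qed

lemma exp_neg_mult_le_convex_comb:
  fixes a b l x y r :: real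
  assumes "0 < a" "0 < b" "0 \<le> l" "l \<le> 1"
  shows "exp (- ((1 - l) * x + l * y) * r)
           \<le> a powr (1 - l) * b powr l * ((1 - l) / a * exp (- x * r) + l / b * exp (- y * r))"
proof -
  have "exp ((1 - l) * (- x * r - ln a) + l * (- y * r - ln b))
          \<le> (1 - l) * exp (- x * r - ln a) + l * exp (- y * r - ln b)"
    using convex_onD[OF exp_convex, of l "- x * r - ln a" "- y * r - ln b"] assms by simp
  moreover have "exp ((1 - l) * (- x * r - ln a) + l * (- y * r - ln b))
                   = exp (- ((1 - l) * x + l * y) * r) / (a powr (1 - l) * b powr l)"
  proof -
    have "a powr (1 - l) * b powr l = exp ((1 - l) * ln a + l * ln b)"
      using assms by (simp add: powr_def exp_add)
    then show ?thesis
      by (simp only: exp_diff[symmetric]) (simp add: algebra_simps)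
  qed
  moreover have "(1 - l) * exp (- x * r - ln a) + l * exp (- y * r - ln b)
                   = (1 - l) / a * exp (- x * r) + l / b * exp (- y * r)"
    using assms by (simp add: exp_diff)
  ultimately show ?thesis
    using assms by (simp add: divide_le_eq mult.commute)
qed

lemma laplace_transform_log_concave:
  assumes "laplace_transform_of_pos_rv \<phi>"
  shows "concave_on {0..} (\<lambda>t. - ln (\<phi> t))"
proof (rule concave_on_linorderI)
  obtain \<mu> where "prob_space \<mu>" and int: "\<And>t. 0 \<le> t \<Longrightarrow> integrable \<mu> (\<lambda>x. exp (- t * x))"
    and \<phi>: "\<And>t. 0 \<le> t \<Longrightarrow> \<phi> t = (\<integral>x. exp (- t * x) \<partial>\<mu>)"
    using laplace_transform_of_pos_rvE[OF assms] by metis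
  fix l x y :: real assume l: "0 < l" "l < 1" and xy: "x \<in> {0..}" "y \<in> {0..}"
  define z where "z = (1 - l) * x + l * y"
  define P where "P = \<phi> x powr (1 - l) * \<phi> y powr l"
  have pos: "\<phi> x > 0" "\<phi> y > 0" "z \<ge> 0"
    using laplace_transform_pos[OF assms] xy l by (auto simp: z_def)
  have "\<phi> z = (\<integral>r. exp (- z * r) \<partial>\<mu>)" using \<phi> pos by simp
  also have "\<dots> \<le> (\<integral>r. P * ((1 - l) / \<phi> x * exp (- x * r) + l / \<phi> y * exp (- y * r)) \<partial>\<mu>)"
    using int xy pos l exp_neg_mult_le_convex_comb[of "\<phi> x" "\<phi> y" l x y, folded z_def]
    by (intro integral_mono) (auto simp: P_def)
  also have "\<dots> = P * ((1 - l) / \<phi> x * \<phi> x + l / \<phi> y * \<phi> y)"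
    using int xy \<phi> by (simp add: Bochner_Integration.integral_add)
  also have "\<dots> = P"
    using pos by (simp add: field_simps)
  finally have "ln (\<phi> z) \<le> ln P"
    using laplace_transform_pos[OF assms \<open>z \<ge> 0\<close>] by simp
  then show "(1 - l) * - ln (\<phi> x) + l * - ln (\<phi> y) \<le> - ln (\<phi> ((1 - l) *\<^sub>R x + l *\<^sub>R y))"
    using pos by (simp add: P_def z_def ln_mult ln_powr)
qed simp

locale archimedean_generator =
  fixes \<phi> :: "real \<Rightarrow> real"
  assumes laplace: "laplace_transform_of_pos_rv \<phi>"
    and continuous: "continuous_on {0..} \<phi>"
    and strict_antimono: "strict_antimono_on {0..} \<phi>"
    and at_0: "\<phi> 0 = 1"
    and at_top: "(\<phi> \<longlongrightarrow> 0) at_top"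
begin

lemma phi_less: "0 \<le> s \<Longrightarrow> s < t \<Longrightarrow> \<phi> t < \<phi> s"
  using monotone_onD[OF strict_antimono, of s t] by simp

lemma phi_pos: "0 \<le> t \<Longrightarrow> 0 < \<phi> t"
  by (rule laplace_transform_pos[OF laplace])

sublocale concave_mono_halfline "\<lambda>t. - ln (\<phi> t)"
proof
  show "concave_on {0..} (\<lambda>t. - ln (\<phi> t))"
    by (rule laplace_transform_log_concave[OF laplace])
  show "mono_on {0..} (\<lambda>t. - ln (\<phi> t))"
  proof (rule mono_onI)
    fix r s :: real assume "r \<in> {0..}" "s \<in> {0..}" "r \<le> s"
    then show "- ln (\<phi> r) \<le> - ln (\<phi> s)"
      using phi_less[of r s] phi_pos[of r] phi_pos[of s] by (cases "r = s") auto
  qed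
qed

lemma gen_inv:
  assumes "0 < v" "v \<le> 1"
  shows "0 \<le> gen_inv \<phi> v" "\<phi> (gen_inv \<phi> v) = v"
proof -
  obtain T where T: "\<And>t. T \<le> t \<Longrightarrow> \<phi> t < v"
    using order_tendstoD(2)[OF at_top \<open>0 < v\<close>] by (auto simp: eventually_at_top_linorder)
  have "\<exists>t. 0 \<le> t \<and> t \<le> max T 0 \<and> \<phi> t = v"
    using T[of "max T 0"] assms at_0
    by (intro IVT2' continuous_on_subset[OF continuous]) auto
  then obtain t where t: "0 \<le> t" "\<phi> t = v" by blast
  have "s = t" if "0 \<le> s" "\<phi> s = v" for s
    using phi_less[of s t] phi_less[of t s] that t by (cases s t rule: linorder_cases) auto
  with t have "\<exists>!t. 0 \<le> t \<and> \<phi> t = v" by blast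
  from theI'[OF this] show "0 \<le> gen_inv \<phi> v" "\<phi> (gen_inv \<phi> v) = v"
    unfolding gen_inv_def by auto
qed

lemma filterlim_gen_inv_at_top: "filterlim (gen_inv \<phi>) at_top (at_right 0)"
  unfolding filterlim_at_top
proof
  fix M :: real
  have "eventually (\<lambda>v. v < \<phi> (max M 0) \<and> v \<le> 1) (at_right 0)"
    using phi_pos[of "max M 0"] unfolding eventually_at_right_field
    by (intro exI[of _ "min 1 (\<phi> (max M 0))"]) auto
  then show "eventually (\<lambda>v. M \<le> gen_inv \<phi> v) (at_right 0)"
    unfolding eventually_at_filter
  proof eventually_elim
    case (elim v)
    then show ?case
      using gen_inv[of v] phi_less[of "gen_inv \<phi> v" "max M 0"] by fastforce
  qed
qed

lemma filterlim_gen_inv_scaled_at_top: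
  assumes "0 < c"
  shows "filterlim (\<lambda>u. gen_inv \<phi> (u * c)) at_top (at_right 0)"
proof -
  have "filterlim (\<lambda>u. u * c) (at_right 0) (at_right 0)"
    using assms by (intro filterlim_at_withinI tendsto_mult_left_zero tendsto_ident_at)
      (auto intro!: eventually_mono[OF eventually_at_right_less])
  then show ?thesis by (rule filterlim_compose[OF filterlim_gen_inv_at_top])
qed

lemma Gamma_class_imp_slope_pos:
  assumes "\<phi> \<in> Gamma_class \<alpha> g" "\<alpha> \<noteq> 0" "\<forall>t. g t > 0" "ultimately_decreasing g"
  shows "asymptotic_slope > 0"
proof -
  obtain t0 where t0: "\<And>s t. t0 \<le> s \<Longrightarrow> s \<le> t \<Longrightarrow> g t \<le> g s"
    using assms(4) unfolding ultimately_decreasing_def by blast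
  have bounded: "eventually (\<lambda>t. 0 \<le> g t \<and> g t \<le> g t0) at_top"
    unfolding eventually_at_top_linorder using t0 assms(3) by (intro exI[of _ t0]) (auto simp: less_imp_le)
  have "((\<lambda>t. \<phi> (t + 1 * g t) / \<phi> t) \<longlongrightarrow> exp (- \<alpha> * 1)) at_top"
    using assms(1) unfolding Gamma_class_def by blast
  from tendsto_minus[OF tendsto_ln[OF this]]
  have "((\<lambda>t. - ln (\<phi> (t + g t) / \<phi> t)) \<longlongrightarrow> \<alpha>) at_top" by simp
  moreover have "eventually (\<lambda>t. - ln (\<phi> (t + g t) / \<phi> t) = - ln (\<phi> (t + g t)) - - ln (\<phi> t)) at_top"
    unfolding eventually_at_top_linorder
  proof (intro exI[of _ 0] allI impI)
    fix t :: real assume "0 \<le> t"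
    then show "- ln (\<phi> (t + g t) / \<phi> t) = - ln (\<phi> (t + g t)) - - ln (\<phi> t)"
      using phi_pos[of t] phi_pos[of "t + g t"] assms(3)[rule_format, of t] by (simp add: ln_div)
  qed
  ultimately have "((\<lambda>t. - ln (\<phi> (t + g t)) - - ln (\<phi> t)) \<longlongrightarrow> \<alpha>) at_top"
    by (rule Lim_transform_eventually)
  then show ?thesis by (rule asymptotic_slope_pos[OF bounded _ \<open>\<alpha> \<noteq> 0\<close>])
qed

lemma limit_ratio_exponent_eq:
  assumes slope: "asymptotic_slope > 0" and "D > 0" "\<tau> > 0"
    and lim: "((\<lambda>t. \<phi> (t * D) / \<phi> t powr k) \<longlongrightarrow> \<tau>) at_top"
  shows "k = D"
proof (rule scaled_diff_convergent_imp_eq[OF slope \<open>D > 0\<close>])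
  from tendsto_minus[OF tendsto_ln[OF lim]]
  have "((\<lambda>t. - ln (\<phi> (t * D) / \<phi> t powr k)) \<longlongrightarrow> - ln \<tau>) at_top"
    using \<open>\<tau> > 0\<close> by simp
  moreover have "eventually (\<lambda>t. - ln (\<phi> (t * D) / \<phi> t powr k) = - ln (\<phi> (D * t)) - k * - ln (\<phi> t)) at_top"
    unfolding eventually_at_top_linorder
  proof (intro exI[of _ 0] allI impI)
    fix t :: real assume "0 \<le> t"
    then show "- ln (\<phi> (t * D) / \<phi> t powr k) = - ln (\<phi> (D * t)) - k * - ln (\<phi> t)"
      using phi_pos[of t] phi_pos[of "t * D"] \<open>D > 0\<close> by (simp add: ln_div ln_powr mult.commute)
  qed
  ultimately show "((\<lambda>t. - ln (\<phi> (D * t)) - k * - ln (\<phi> t)) \<longlongrightarrow> - ln \<tau>) at_top"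
    by (rule Lim_transform_eventually)
qed

lemma arch_copula_scaling_limit:
  assumes slope: "asymptotic_slope > 0" and "d > 0" and w: "\<And>i. i < d \<Longrightarrow> 0 < w i"
    and lim: "((\<lambda>t. \<phi> (t * real d) / \<phi> t powr k) \<longlongrightarrow> \<tau>) at_top"
  shows "((\<lambda>u. arch_copula \<phi> d (\<lambda>i. u * w i) / u powr k) \<longlongrightarrow> \<tau> * (\<Prod>i<d. w i)) (at_right 0)"
proof -
  define t where "t u = gen_inv \<phi> u" for u
  define x where "x i u = gen_inv \<phi> (u * w i)" for i u
  have t_top: "filterlim t at_top (at_right 0)"
    unfolding t_def[abs_def] by (rule filterlim_gen_inv_at_top)
  have x_top: "filterlim (x i) at_top (at_right 0)" if "i < d" for i
    unfolding x_def[abs_def] using w[OF that] by (rule filterlim_gen_inv_scaled_at_top)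
  have small: "eventually (\<lambda>u. 0 < u \<and> u < 1 \<and> (\<forall>i\<in>{..<d}. u * w i < 1)) (at_right 0)"
    by (intro eventually_conj eventually_at_right_less order_tendstoD(2)[OF tendsto_ident_at]
        eventually_ball_finite ballI order_tendstoD(2)[OF tendsto_mult_left_zero[OF tendsto_ident_at]]) auto
  have t_inverse: "0 \<le> t u" "\<phi> (t u) = u" if "0 < u" "u < 1" for u
    using gen_inv[of u] that by (auto simp: t_def)
  have x_inverse: "0 \<le> x i u" "\<phi> (x i u) = u * w i" if "0 < u" "u * w i < 1" "i < d" for u i
    using gen_inv[of "u * w i"] that w[of i] by (auto simp: x_def)
  have level: "eventually (\<lambda>u. - ln (\<phi> (x i u)) - - ln (\<phi> (t u)) = - ln (w i)) (at_right 0)"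
    if "i < d" for i
    using small
  proof eventually_elim
    case (elim u)
    then show ?case
      using t_inverse[of u] x_inverse[of u i] that w[OF that] by (simp add: ln_mult)
  qed
  have "((\<lambda>u. - ln (\<phi> (\<Sum>i<d. x i u)) - - ln (\<phi> (real (card {..<d}) * t u)))
          \<longlongrightarrow> (\<Sum>i<d. - ln (w i))) (at_right 0)"
    using \<open>d > 0\<close> x_top level by (intro tendsto_level_diff_sum[OF slope _ _ t_top]) auto
  from tendsto_mult[OF tendsto_exp[OF tendsto_minus[OF this]] filterlim_compose[OF lim t_top]]
  have "((\<lambda>u. exp (- (- ln (\<phi> (\<Sum>i<d. x i u)) - - ln (\<phi> (real d * t u))))
              * (\<phi> (t u * real d) / \<phi> (t u) powr k)) \<longlongrightarrow> (\<Prod>i<d. w i) * \<tau>) (at_right 0)"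
    using w by (simp add: exp_sum sum_negf)
  moreover have "eventually (\<lambda>u. exp (- (- ln (\<phi> (\<Sum>i<d. x i u)) - - ln (\<phi> (real d * t u))))
              * (\<phi> (t u * real d) / \<phi> (t u) powr k) = arch_copula \<phi> d (\<lambda>i. u * w i) / u powr k)
      (at_right 0)"
    using small
  proof eventually_elim
    case (elim u)
    have "0 < \<phi> (\<Sum>i<d. x i u)" "0 < \<phi> (t u * real d)"
      using elim t_inverse[of u] x_inverse[of u] by (auto intro!: phi_pos sum_nonneg)
    moreover have "arch_copula \<phi> d (\<lambda>i. u * w i) = \<phi> (\<Sum>i<d. x i u)"
      using elim by (auto simp: arch_copula_def x_def dest: w)
    ultimately show ?case
      using elim t_inverse[of u] by (simp add: exp_diff mult.commute)
  qed
  ultimately show ?thesis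
    by (auto simp: mult.commute elim: Lim_transform_eventually)
qed

end

theorem theorem3p3:
  fixes \<phi> g :: "real \<Rightarrow> real" and d :: nat and \<alpha> k \<tau> :: real and w :: "nat \<Rightarrow> real"
  assumes "d \<ge> 2"
    and "laplace_transform_of_pos_rv \<phi>"
    and "continuous_on {0..} \<phi>"
    and "strict_antimono_on {0..} \<phi>"
    and "\<phi> 0 = 1"
    and "(\<phi> \<longlongrightarrow> 0) at_top"
    and "\<alpha> > 0"
    and "\<forall>t. g t > 0" and "g \<in> borel_measurable borel"
    and "ultimately_decreasing g"
    and "\<phi> \<in> Gamma_class \<alpha> g"
    and "1 \<le> k" and "k \<le> real d"
    and "\<tau> > 0"
    and "((\<lambda>t. \<phi> (t * real d) / (\<phi> t) powr k) \<longlongrightarrow> \<tau>) at_top"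
    and "\<forall>i<d. w i \<ge> 0"
  shows "((\<lambda>u. arch_copula \<phi> d (\<lambda>i. u * w i) / u powr k)
            \<longlongrightarrow> \<tau> * (\<Prod>i<d. w i powr (k / real d))) (at_right 0)"
proof -
  interpret archimedean_generator \<phi>
    by (rule archimedean_generator.intro) (use assms in auto)
  have slope: "asymptotic_slope > 0"
    using assms by (intro Gamma_class_imp_slope_pos[of \<alpha> g]) auto
  have "k = real d"
    using assms(1,14,15) by (intro limit_ratio_exponent_eq[OF slope]) auto
  then have exponent: "k / real d = 1"
    using assms(1) by simp
  show ?thesis
  proof (cases "\<exists>i<d. w i = 0")
    case True
    then have "(\<Prod>i<d. w i powr (k / real d)) = 0" "\<And>u. arch_copula \<phi> d (\<lambda>i. u * w i) = 0"
      by (auto simp: arch_copula_def intro: prod_zero)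
    then show ?thesis by (simp only:) simp
  next
    case False
    then have w: "\<And>i. i < d \<Longrightarrow> 0 < w i"
      using assms(16) by force
    have "(\<Prod>i<d. w i powr (k / real d)) = (\<Prod>i<d. w i)"
      using w by (simp add: exponent less_imp_le)
    with arch_copula_scaling_limit[OF slope _ w assms(15)] assms(1) show ?thesis
      by simp
  qed
qed

end
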